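(* Let $C,E\in W^{(l)}\setminus\{0\}$, $m\in\mathbb{N}$ and $(\rho,\sigma)\in\mathfrak V$. If $[C,E]\neq0$, then $[C^m,E]\neq0$ and $\ell_{\rho,\sigma}([C^m,E])=m\,\ell_{\rho,\sigma}(C)^{m-1}\ell_{\rho,\sigma}([C,E])$. Moreover $[C^m,E]_{\rho,\sigma}\neq0$ if and only if $[C,E]_{\rho,\sigma}\neq0$.
   Context: $K$ is a field of characteristic zero, $l\in\mathbb{N}$. $W^{(l)}$ is the associative $K$-algebra with $K$-basis $\{X^{i/l}Y^j:i\in\mathbb{Z},j\in\mathbb{N}_0\}$, powers of $X$ multiplying as Laurent monomials and $[Y,X^\alpha]=\alpha X^{\alpha-1}$ for $\alpha\in\frac1l\mathbb{Z}$. $L^{(l)}=K[x^{\pm1/l},y]$, $\Psi^{(l)}(X^{i/l}Y^j)=x^{i/l}y^j$ ($K$-linear); supports are sets of exponents with nonzero coefficient. $\mathfrak V=\{(\rho,\sigma)\in\mathbb{Z}^2:\gcd(\rho,\sigma)=1,\rho+\sigma>0\}$. For $P\ne0$, $v_{\rho,\sigma}(P)=\max\{\rho a+\sigma b:(a,b)\in\mathrm{Supp}(P)\}$ and $\ell_{\rho,\sigma}(P)\in L^{(l)}$ = sum of terms of $\Psi^{(l)}(P)$ attaining it. $[P,Q]_{\rho,\sigma}:=0$ if $[P,Q]=0$ or $v_{\rho,\sigma}([P,Q])<v_{\rho,\sigma}(P)+v_{\rho,\sigma}(Q)-(\rho+\sigma)$, and $:=\ell_{\rho,\sigma}([P,Q])$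 otherwise. *)

theory Defs
  imports Complex_Main "HOL-Library.Poly_Mapping"
begin

text \<open>An element of W^(l) is represented by its finitely supported coefficient map:
  the basis element X^(i/l) Y^j corresponds to the key (i, j) :: int * nat.
  The same representation is used for L^(l) = K[x^(+-1/l), y], so that Psi^(l) is
  the identity on coefficient maps.\<close>

type_synonym 'a wel = "(int \<times> nat) \<Rightarrow>\<^sub>0 'a"

text \<open>Product of basis elements in W^(l):
  (X^(a/l) Y^j)(X^(b/l) Y^n) = sum_(k<=j) (j choose k) (b/l)(b/l-1)...(b/l-k+1) X^((a+b-kl)/l) Y^(j-k+n),
  which follows from [Y, X^alpha] = alpha X^(alpha-1).\<close>
definition wmono_mult :: "nat \<Rightarrow> int \<times> nat \<Rightarrow> int \<times> nat \<Rightarrow> 'a::field_char_0 wel" where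
  "wmono_mult l p q = (case p of (a, j) \<Rightarrow> case q of (b, n) \<Rightarrow>
     (\<Sum>k\<in>{0..j}. Poly_Mapping.single (a + b - int k * int l, j - k + n)
        (of_nat (j choose k) * (\<Prod>t<k. of_int b / of_nat l - of_nat t))))"

definition wmult :: "nat \<Rightarrow> 'a::field_char_0 wel \<Rightarrow> 'a wel \<Rightarrow> 'a wel" where
  "wmult l P Q = (\<Sum>p\<in>Poly_Mapping.keys P. \<Sum>q\<in>Poly_Mapping.keys Q.
      Poly_Mapping.map (\<lambda>c. Poly_Mapping.lookup P p * Poly_Mapping.lookup Q q * c) (wmono_mult l p q))"

definition wone :: "'a::field_char_0 wel" where
  "wone = Poly_Mapping.single (0, 0) 1"

primrec wpow :: "nat \<Rightarrow> 'a::field_char_0 wel \<Rightarrow> nat \<Rightarrow> 'a wel" where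
  "wpow l P 0 = wone"
| "wpow l P (Suc m) = wmult l P (wpow l P m)"

definition wcomm :: "nat \<Rightarrow> 'a::field_char_0 wel \<Rightarrow> 'a wel \<Rightarrow> 'a wel" where
  "wcomm l P Q = wmult l P Q - wmult l Q P"

definition lmult :: "'a::field_char_0 wel \<Rightarrow> 'a wel \<Rightarrow> 'a wel" where
  "lmult P Q = (\<Sum>p\<in>Poly_Mapping.keys P. \<Sum>q\<in>Poly_Mapping.keys Q.
      Poly_Mapping.single (fst p + fst q, snd p + snd q) (Poly_Mapping.lookup P p * Poly_Mapping.lookup Q q))"

primrec lpow :: "'a::field_char_0 wel \<Rightarrow> nat \<Rightarrow> 'a wel" where
  "lpow P 0 = Poly_Mapping.single (0, 0) 1"
| "lpow P (Suc m) = lmult P (lpow P m)"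

definition lsmult :: "'a::field_char_0 \<Rightarrow> 'a wel \<Rightarrow> 'a wel" where
  "lsmult c P = Poly_Mapping.map (\<lambda>x. c * x) P"

definition wdeg :: "int \<Rightarrow> int \<Rightarrow> nat \<Rightarrow> int \<times> nat \<Rightarrow> rat" where
  "wdeg \<rho> \<sigma> l p = of_int \<rho> * (of_int (fst p) / of_nat l) + of_int \<sigma> * of_nat (snd p)"

definition vdeg :: "int \<Rightarrow> int \<Rightarrow> nat \<Rightarrow> 'a::field_char_0 wel \<Rightarrow> rat" where
  "vdeg \<rho> \<sigma> l P = Max (wdeg \<rho> \<sigma> l ` Poly_Mapping.keys P)"

definition lead :: "int \<Rightarrow> int \<Rightarrow> nat \<Rightarrow> 'a::field_char_0 wel \<Rightarrow> 'a wel" where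
  "lead \<rho> \<sigma> l P = (\<Sum>p\<in>{p\<in>Poly_Mapping.keys P. wdeg \<rho> \<sigma> l p = vdeg \<rho> \<sigma> l P}.
      Poly_Mapping.single p (Poly_Mapping.lookup P p))"

definition wbracket :: "int \<Rightarrow> int \<Rightarrow> nat \<Rightarrow> 'a::field_char_0 wel \<Rightarrow> 'a wel \<Rightarrow> 'a wel" where
  "wbracket \<rho> \<sigma> l P Q =
     (if wcomm l P Q = 0 \<or>
         vdeg \<rho> \<sigma> l (wcomm l P Q) < vdeg \<rho> \<sigma> l P + vdeg \<rho> \<sigma> l Q - of_int (\<rho> + \<sigma>)
      then 0 else lead \<rho> \<sigma> l (wcomm l P Q))"

end

theory Submission
  imports Defs "HOL-Library.Product_Plus" "HOL-Library.Product_Lexorder"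
    "HOL-Computational_Algebra.Formal_Power_Series"
begin

text \<open>
  Everything rests on two facts about W^(l). First, it is associative: it acts faithfully on
  the Laurent polynomials in X^(1/l) (X^alpha by multiplication, Y as d/dX), and the
  defining product formula is exactly composition of these operators, by the Vandermonde
  identity for falling factorials. Second, leading forms are multiplicative: in a product
  of basis elements the terms coming from commutations lose weight rho + sigma > 0, so the
  top (rho,sigma)-homogeneous component of a product is the commutative product in L^(l)
  of the top components. Writing [C^(m+1), E] = C [C^m, E] + [C, E] C^m, induction on m
  gives the leading form m l(C)^(m-1) l([C,E]), which is nonzero because L^(l) is a domain
  of characteristic zero; the weights then show that the two brackets pass the defining
  inequality together.
\<close>

subsection \<open>Linear extension of maps on basis elements\<close>

definition lin_ext :: "('k \<Rightarrow> ('m \<Rightarrow>\<^sub>0 'a::comm_ring_1)) \<Rightarrow> ('k \<Rightarrow>\<^sub>0 'a) \<Rightarrow> ('m \<Rightarrow>\<^sub>0 'a)" where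
  "lin_ext f P = (\<Sum>x\<in>Poly_Mapping.keys P. Poly_Mapping.map (\<lambda>c. Poly_Mapping.lookup P x * c) (f x))"

lemma lookup_map_times:
  "Poly_Mapping.lookup (Poly_Mapping.map (\<lambda>c. a * c) p) k = (a::'a::comm_ring_1) * Poly_Mapping.lookup p k"
  by (simp add: Poly_Mapping.map.rep_eq when_def)

lemma lookup_lin_ext:
  "Poly_Mapping.lookup (lin_ext f P) k
    = (\<Sum>x\<in>Poly_Mapping.keys P. Poly_Mapping.lookup P x * Poly_Mapping.lookup (f x) k)"
  by (simp add: lin_ext_def lookup_sum lookup_map_times)

lemma lookup_lin_ext_superset:
  assumes "finite A" "Poly_Mapping.keys P \<subseteq> A"
  shows "Poly_Mapping.lookup (lin_ext f P) k
    = (\<Sum>x\<in>A. Poly_Mapping.lookup P x * Poly_Mapping.lookup (f x) k)"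
  unfolding lookup_lin_ext by (rule sum.mono_neutral_left) (use assms in \<open>auto simp: in_keys_iff\<close>)

lemma keys_lin_ext:
  "Poly_Mapping.keys (lin_ext f P) \<subseteq> (\<Union>x\<in>Poly_Mapping.keys P. Poly_Mapping.keys (f x))"
proof
  fix k assume "k \<in> Poly_Mapping.keys (lin_ext f P)"
  then obtain x where "x \<in> Poly_Mapping.keys P" "Poly_Mapping.lookup P x * Poly_Mapping.lookup (f x) k \<noteq> 0"
    unfolding in_keys_iff[of _ "lin_ext f P"] lookup_lin_ext by (meson sum.not_neutral_contains_not_neutral)
  then show "k \<in> (\<Union>x\<in>Poly_Mapping.keys P. Poly_Mapping.keys (f x))"
    by (intro UN_I) (auto simp: in_keys_iff)
qed

lemma lin_ext_add: "lin_ext f (P + Q) = lin_ext f P + lin_ext f Q"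
proof (rule poly_mapping_eqI)
  fix k
  have "Poly_Mapping.keys (P + Q) \<subseteq> Poly_Mapping.keys P \<union> Poly_Mapping.keys Q"
    by (rule keys_add)
  then show "Poly_Mapping.lookup (lin_ext f (P + Q)) k = Poly_Mapping.lookup (lin_ext f P + lin_ext f Q) k"
    by (simp add: lookup_add lookup_lin_ext_superset[of "Poly_Mapping.keys P \<union> Poly_Mapping.keys Q"]
        distrib_right sum.distrib)
qed

lemma lin_ext_diff: "lin_ext f (P - Q) = lin_ext f P - lin_ext f Q"
proof (rule poly_mapping_eqI)
  fix k
  have "Poly_Mapping.keys (P - Q) \<subseteq> Poly_Mapping.keys P \<union> Poly_Mapping.keys Q"
    by (auto simp: in_keys_iff lookup_minus)
  then show "Poly_Mapping.lookup (lin_ext f (P - Q)) k = Poly_Mapping.lookup (lin_ext f P - lin_ext f Q) k"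
    by (simp add: lookup_minus lookup_lin_ext_superset[of "Poly_Mapping.keys P \<union> Poly_Mapping.keys Q"]
        left_diff_distrib sum_subtractf)
qed

lemma lin_ext_zero [simp]: "lin_ext f 0 = 0"
  by (simp add: lin_ext_def)

lemma lin_ext_sum: "finite S \<Longrightarrow> lin_ext f (sum g S) = (\<Sum>s\<in>S. lin_ext f (g s))"
  by (induction S rule: finite_induct) (simp_all add: lin_ext_add)

lemma lin_ext_single: "lin_ext f (Poly_Mapping.single x c) = Poly_Mapping.map (\<lambda>d. c * d) (f x)"
  by (rule poly_mapping_eqI) (simp add: lookup_lin_ext lookup_map_times)

lemma lin_ext_single_one: "lin_ext f (Poly_Mapping.single x 1) = f x"
  by (rule poly_mapping_eqI) (simp add: lookup_lin_ext)

lemma lin_ext_single_id: "lin_ext (\<lambda>x. Poly_Mapping.single x 1) P = P"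
  by (rule poly_mapping_eqI)
     (simp add: lookup_lin_ext lookup_single when_def in_keys_iff if_distrib[of "(*) _"] cong: if_cong)

lemma lin_ext_diff_fun: "lin_ext (\<lambda>x. f x - g x) P = lin_ext f P - lin_ext g P"
  by (rule poly_mapping_eqI) (simp add: lookup_lin_ext lookup_minus right_diff_distrib sum_subtractf)

lemma lin_ext_cong: "(\<And>x. x \<in> Poly_Mapping.keys P \<Longrightarrow> f x = g x) \<Longrightarrow> lin_ext f P = lin_ext g P"
  by (simp add: lin_ext_def)

lemma lin_ext_lin_ext: "lin_ext h (lin_ext f P) = lin_ext (\<lambda>x. lin_ext h (f x)) P"
proof (rule poly_mapping_eqI)
  fix k
  let ?Y = "Poly_Mapping.keys (lin_ext f P) \<union> (\<Union>x\<in>Poly_Mapping.keys P. Poly_Mapping.keys (f x))"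
  have fin: "finite ?Y" by simp
  have "Poly_Mapping.lookup (lin_ext h (lin_ext f P)) k
      = (\<Sum>y\<in>?Y. \<Sum>x\<in>Poly_Mapping.keys P.
           Poly_Mapping.lookup P x * (Poly_Mapping.lookup (f x) y * Poly_Mapping.lookup (h y) k))"
    by (subst lookup_lin_ext_superset[OF fin]) (auto simp: lookup_lin_ext sum_distrib_right mult.assoc)
  also have "\<dots> = (\<Sum>x\<in>Poly_Mapping.keys P.
      Poly_Mapping.lookup P x * (\<Sum>y\<in>?Y. Poly_Mapping.lookup (f x) y * Poly_Mapping.lookup (h y) k))"
    by (subst sum.swap) (simp add: sum_distrib_left)
  also have "\<dots> = Poly_Mapping.lookup (lin_ext (\<lambda>x. lin_ext h (f x)) P) k"
    unfolding lookup_lin_ext[where f = "\<lambda>x. lin_ext h (f x)"]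
    by (rule sum.cong[OF refl], subst lookup_lin_ext_superset[OF fin]) auto
  finally show "Poly_Mapping.lookup (lin_ext h (lin_ext f P)) k
      = Poly_Mapping.lookup (lin_ext (\<lambda>x. lin_ext h (f x)) P) k" .
qed

lemma lin_ext_swap: "lin_ext (\<lambda>a. lin_ext (g a) B) A = lin_ext (\<lambda>b. lin_ext (\<lambda>a. g a b) A) B"
  by (rule poly_mapping_eqI)
     (simp add: lookup_lin_ext sum_distrib_left mult.left_commute sum.swap[of _ "Poly_Mapping.keys A"])

lemma lin_ext_times_left:
  "lin_ext h P * Q = lin_ext (\<lambda>x. h x * Q) (P :: 'k \<Rightarrow>\<^sub>0 'a::comm_ring_1)"
  unfolding lin_ext_def sum_distrib_right
  by (rule sum.cong[OF refl]) (simp add: mult_map_scale_conv_mult mult.assoc)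

lemma lin_ext_times_right:
  "(Q :: 'm::comm_monoid_add \<Rightarrow>\<^sub>0 'a) * lin_ext h P = lin_ext (\<lambda>x. Q * h x) (P :: 'k \<Rightarrow>\<^sub>0 'a::comm_ring_1)"
  unfolding lin_ext_def sum_distrib_left
  by (rule sum.cong[OF refl]) (simp add: mult_map_scale_conv_mult mult.left_commute)

lemma sum_single_key:
  "finite S \<Longrightarrow> (\<Sum>k\<in>S. Poly_Mapping.single x (g k)) = Poly_Mapping.single x (\<Sum>k\<in>S. g k)"
  by (induction S rule: finite_induct) (simp_all add: single_add)

subsection \<open>A faithful representation of W^(l); associativity\<close>

definition falling_fact :: "'a::field_char_0 \<Rightarrow> nat \<Rightarrow> 'a" where
  "falling_fact x k = (\<Prod>t<k. x - of_nat t)"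

lemma falling_fact_eq_gbinomial: "falling_fact x k = fact k * (x gchoose k)"
  by (simp add: falling_fact_def gbinomial_mult_fact atLeast0LessThan)

lemma falling_fact_Vandermonde:
  "falling_fact (x + y) j = (\<Sum>k\<in>{0..j}. of_nat (j choose k) * falling_fact y k * falling_fact x (j - k))"
proof -
  have "falling_fact (x + y) j = fact j * (\<Sum>k\<in>{0..j}. (y gchoose k) * (x gchoose (j - k)))"
    using gbinomial_Vandermonde[of y x j] by (simp add: falling_fact_eq_gbinomial add.commute)
  also have "\<dots> = (\<Sum>k\<in>{0..j}. of_nat (j choose k) * falling_fact y k * falling_fact x (j - k))"
    unfolding sum_distrib_left
  proof (rule sum.cong[OF refl])
    fix k assume "k \<in> {0..j}"
    then have "(of_nat (j choose k) :: 'a) = fact j / (fact k * fact (j - k))"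
      using binomial_fact[of k j] by simp
    then show "fact j * ((y gchoose k) * (x gchoose (j - k)))
        = of_nat (j choose k) * falling_fact y k * falling_fact x (j - k)"
      by (simp add: falling_fact_eq_gbinomial field_simps)
  qed
  finally show ?thesis .
qed

lemma falling_fact_add: "falling_fact x (m + n) = falling_fact x n * falling_fact (x - of_nat n) m"
  by (induction m) (simp_all add: falling_fact_def algebra_simps)

lemma falling_fact_of_nat_eq_0: "n < j \<Longrightarrow> falling_fact (of_nat n :: 'a::field_char_0) j = 0"
  unfolding falling_fact_def by (rule prod_zero) auto

lemma falling_fact_of_nat_self: "falling_fact (of_nat n :: 'a::field_char_0) n \<noteq> 0"
  unfolding falling_fact_def by (subst prod_zero_iff) auto

text \<open>
  Laurent polynomials in X^(1/l) are coded by their coefficients, the key c :: int standing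
  for X^(c/l); the basis element X^(a/l) Y^j acts as (d/dX)^j followed by multiplication
  with X^(a/l).
\<close>

definition mono_act :: "nat \<Rightarrow> int \<times> nat \<Rightarrow> int \<Rightarrow> (int \<Rightarrow>\<^sub>0 'a::field_char_0)" where
  "mono_act l x c = Poly_Mapping.single (c + fst x - int (snd x) * int l)
     (falling_fact (of_int c / of_nat l) (snd x))"

definition wact :: "nat \<Rightarrow> 'a::field_char_0 wel \<Rightarrow> int \<Rightarrow> (int \<Rightarrow>\<^sub>0 'a)" where
  "wact l P c = lin_ext (\<lambda>x. mono_act l x c) P"

lemma lookup_mono_act:
  "Poly_Mapping.lookup (mono_act l x c) d
    = (if d = c + fst x - int (snd x) * int l then falling_fact (of_int c / of_nat l) (snd x) else 0)"
  by (simp add: mono_act_def lookup_single)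

lemma wact_wmono_mult:
  assumes "l \<ge> 1"
  shows "wact l (wmono_mult l p q :: 'a::field_char_0 wel) c = lin_ext (\<lambda>e. mono_act l p e) (mono_act l q c)"
proof -
  obtain a j b n where p: "p = (a, j)" and q: "q = (b, n)" by (cases p, cases q)
  define u :: 'a where "u = of_int c / of_nat l"
  define v :: 'a where "v = of_int b / of_nat l"
  define e where "e = c + a + b - int (j + n) * int l"
  have l0: "(of_nat l :: 'a) \<noteq> 0" using assms by simp
  have "wact l (wmono_mult l p q :: 'a wel) c
      = (\<Sum>k\<in>{0..j}. Poly_Mapping.single e
           (of_nat (j choose k) * falling_fact v k * falling_fact u (j - k + n)))"
    unfolding wact_def wmono_mult_def p q prod.simps lin_ext_sum[OF finite_atLeastAtMost]
    by (rule sum.cong[OF refl])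
       (simp add: lin_ext_single mono_act_def falling_fact_def[symmetric] u_def v_def e_def
         of_nat_diff algebra_simps)
  also have "\<dots> = Poly_Mapping.single e
      (\<Sum>k\<in>{0..j}. of_nat (j choose k) * falling_fact v k * falling_fact u (j - k + n))"
    by (simp add: sum_single_key)
  also have "(\<Sum>k\<in>{0..j}. of_nat (j choose k) * falling_fact v k * falling_fact u (j - k + n))
      = falling_fact u n * (\<Sum>k\<in>{0..j}. of_nat (j choose k) * falling_fact v k * falling_fact (u - of_nat n) (j - k))"
    unfolding sum_distrib_left
    by (rule sum.cong[OF refl]) (simp only: falling_fact_add mult_ac)
  also have "\<dots> = falling_fact u n * falling_fact (u - of_nat n + v) j"
    by (simp add: falling_fact_Vandermonde)
  also have "Poly_Mapping.single e \<dots> = lin_ext (\<lambda>e. mono_act l p e) (mono_act l q c)"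
  proof -
    have shifted: "(of_int b + of_int c - of_nat l * of_nat n) / (of_nat l :: 'a) = u + v - of_nat n"
      using l0 by (simp add: u_def v_def field_simps)
    show ?thesis
      unfolding mono_act_def p q
      by (simp add: lin_ext_single u_def[symmetric] e_def algebra_simps shifted)
  qed
  finally show ?thesis .
qed

lemma wmult_eq_lin_ext: "wmult l P Q = lin_ext (\<lambda>p. lin_ext (\<lambda>q. wmono_mult l p q) Q) P"
  by (rule poly_mapping_eqI)
     (simp only: wmult_def lookup_lin_ext lookup_sum lookup_map_times, simp add: sum_distrib_left mult.assoc)

lemma wact_wmult:
  assumes "l \<ge> 1"
  shows "wact l (wmult l P Q) c = lin_ext (wact l P) (wact l Q c)"
proof -
  have "wact l (wmult l P Q) c
      = lin_ext (\<lambda>p. lin_ext (\<lambda>q. lin_ext (\<lambda>e. mono_act l p e) (mono_act l q c)) Q) P"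
    unfolding wact_def wmult_eq_lin_ext lin_ext_lin_ext
    by (simp add: wact_wmono_mult[OF assms, unfolded wact_def])
  also have "\<dots> = lin_ext (\<lambda>q. lin_ext (\<lambda>e. lin_ext (\<lambda>p. mono_act l p e) P) (mono_act l q c)) Q"
    by (simp add: lin_ext_swap[of _ _ P])
  also have "\<dots> = lin_ext (wact l P) (wact l Q c)"
    unfolding wact_def lin_ext_lin_ext ..
  finally show ?thesis .
qed

lemma wact_faithful:
  assumes "l \<ge> 1" and "\<And>c. wact l R c = (0 :: int \<Rightarrow>\<^sub>0 'a::field_char_0)"
  shows "R = 0"
proof (rule ccontr)
  assume "R \<noteq> 0"
  then obtain y where "y \<in> Poly_Mapping.keys R" by (metis keys_eq_empty ex_in_conv)
  define sh where "sh x = fst x - int (snd x) * int l" for x :: "int \<times> nat"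
  obtain x0 where x0: "x0 \<in> Poly_Mapping.keys R" "sh x0 = sh y"
    and least: "\<And>x. x \<in> Poly_Mapping.keys R \<Longrightarrow> sh x = sh y \<Longrightarrow> snd x0 \<le> snd x"
    using ex_has_least_nat[of "\<lambda>x. x \<in> Poly_Mapping.keys R \<and> sh x = sh y" y snd]
      \<open>y \<in> Poly_Mapping.keys R\<close> by blast
  define c where "c = int (snd x0) * int l"
  have c: "(of_int c :: 'a) / of_nat l = of_nat (snd x0)"
    using assms(1) by (simp add: c_def)
  \<comment> \<open>x0 has the fewest Y's among the keys of its shift, so applied to X^(snd x0) it is the
    only one of them not killed by too many derivatives.\<close>
  have "Poly_Mapping.lookup (wact l R c) (c + sh x0)
      = (\<Sum>x\<in>Poly_Mapping.keys R. if x = x0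
           then Poly_Mapping.lookup R x0 * falling_fact (of_nat (snd x0)) (snd x0) else 0)"
    unfolding wact_def lookup_lin_ext
  proof (rule sum.cong[OF refl])
    fix x assume x: "x \<in> Poly_Mapping.keys R"
    have "falling_fact (of_nat (snd x0) :: 'a) (snd x) = 0" if "sh x = sh x0" "x \<noteq> x0"
    proof -
      have "snd x \<noteq> snd x0" using that by (auto simp: sh_def prod_eq_iff)
      then show ?thesis using least[OF x] that x0(2) by (simp add: falling_fact_of_nat_eq_0)
    qed
    then show "Poly_Mapping.lookup R x * Poly_Mapping.lookup (mono_act l x c) (c + sh x0)
        = (if x = x0 then Poly_Mapping.lookup R x0 * falling_fact (of_nat (snd x0)) (snd x0) else 0)"
      by (auto simp: lookup_mono_act c sh_def)
  qed
  also have "\<dots> = Poly_Mapping.lookup R x0 * falling_fact (of_nat (snd x0)) (snd x0)"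
    using x0(1) by simp
  also have "\<dots> \<noteq> 0"
    using x0(1) falling_fact_of_nat_self by (simp add: in_keys_iff)
  finally show False using assms(2) by simp
qed

lemma wact_injective:
  assumes "l \<ge> 1" and "\<And>c. wact l P c = (wact l Q c :: int \<Rightarrow>\<^sub>0 'a::field_char_0)"
  shows "P = Q"
  using wact_faithful[OF assms(1), of "P - Q"] assms(2) by (simp add: wact_def lin_ext_diff)

lemma wmult_assoc:
  assumes "l \<ge> 1"
  shows "wmult l (wmult l P Q) R = wmult l P (wmult l Q (R :: 'a::field_char_0 wel))"
proof -
  have "wact l (wmult l P Q) = (\<lambda>c. lin_ext (wact l P) (wact l Q c))"
    using wact_wmult[OF assms] by blast
  then show ?thesis
    by (intro wact_injective[OF assms]) (simp add: wact_wmult[OF assms] lin_ext_lin_ext)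
qed

lemma wmult_wone_right:
  assumes "l \<ge> 1"
  shows "wmult l P (wone :: 'a::field_char_0 wel) = P"
proof -
  have "wact l (wone :: 'a wel) c = Poly_Mapping.single c 1" for c
    by (simp add: wact_def wone_def lin_ext_single mono_act_def falling_fact_def)
  then show ?thesis
    by (intro wact_injective[OF assms]) (simp add: wact_wmult[OF assms] lin_ext_single_one)
qed

lemma wmult_diff_left: "wmult l (P - Q) R = wmult l P R - wmult l Q R"
  by (simp add: wmult_eq_lin_ext lin_ext_diff)

lemma wmult_diff_right: "wmult l P (Q - R) = wmult l P Q - wmult l P R"
  by (simp add: wmult_eq_lin_ext lin_ext_diff lin_ext_diff_fun)

lemma wcomm_wpow_Suc:
  assumes "l \<ge> 1"
  shows "wcomm l (wpow l C (Suc m)) E = wmult l C (wcomm l (wpow l C m) E) + wmult l (wcomm l C E) (wpow l C m)"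
  by (simp add: wcomm_def wmult_diff_left wmult_diff_right wmult_assoc[OF assms])

subsection \<open>Homogeneous components and multiplicativity of leading forms\<close>

definition hcomp :: "int \<Rightarrow> int \<Rightarrow> nat \<Rightarrow> rat \<Rightarrow> 'a::field_char_0 wel \<Rightarrow> 'a wel" where
  "hcomp \<rho> \<sigma> l V P = lin_ext (\<lambda>k. if wdeg \<rho> \<sigma> l k = V then Poly_Mapping.single k 1 else 0) P"

definition weight_le :: "int \<Rightarrow> int \<Rightarrow> nat \<Rightarrow> rat \<Rightarrow> 'a::field_char_0 wel \<Rightarrow> bool" where
  "weight_le \<rho> \<sigma> l V P \<longleftrightarrow> (\<forall>k\<in>Poly_Mapping.keys P. wdeg \<rho> \<sigma> l k \<le> V)"

lemma lookup_hcomp: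
  "Poly_Mapping.lookup (hcomp \<rho> \<sigma> l V P) k = (if wdeg \<rho> \<sigma> l k = V then Poly_Mapping.lookup P k else 0)"
proof -
  have "Poly_Mapping.lookup (hcomp \<rho> \<sigma> l V P) k
      = (\<Sum>x\<in>Poly_Mapping.keys P. if x = k then (if wdeg \<rho> \<sigma> l k = V then Poly_Mapping.lookup P k else 0) else 0)"
    unfolding hcomp_def lookup_lin_ext by (rule sum.cong) (auto simp: lookup_single)
  then show ?thesis by (simp add: in_keys_iff)
qed

lemma hcomp_add: "hcomp \<rho> \<sigma> l V (P + Q) = hcomp \<rho> \<sigma> l V P + hcomp \<rho> \<sigma> l V Q"
  by (simp add: hcomp_def lin_ext_add)

lemma hcomp_single:
  "hcomp \<rho> \<sigma> l V (Poly_Mapping.single x c) = (if wdeg \<rho> \<sigma> l x = V then Poly_Mapping.single x c else 0)"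
  by (simp add: hcomp_def lin_ext_single map_eq_zero_iff)

lemma hcomp_sum: "finite S \<Longrightarrow> hcomp \<rho> \<sigma> l V (sum g S) = (\<Sum>s\<in>S. hcomp \<rho> \<sigma> l V (g s))"
  by (simp add: hcomp_def lin_ext_sum)

lemma hcomp_lin_ext: "hcomp \<rho> \<sigma> l V (lin_ext f P) = lin_ext (\<lambda>x. hcomp \<rho> \<sigma> l V (f x)) P"
  unfolding hcomp_def lin_ext_lin_ext ..

lemma hcomp_eq_0_if_weight_less:
  assumes "weight_le \<rho> \<sigma> l W P" and "W < V"
  shows "hcomp \<rho> \<sigma> l V P = 0"
  using assms by (intro poly_mapping_eqI) (force simp: lookup_hcomp weight_le_def in_keys_iff)

lemma weight_le_add: "weight_le \<rho> \<sigma> l V P \<Longrightarrow> weight_le \<rho> \<sigma> l V Q \<Longrightarrow> weight_le \<rho> \<sigma> l V (P + Q)"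
  unfolding weight_le_def using keys_add[of P Q] by blast

lemma weight_le_mono: "weight_le \<rho> \<sigma> l V P \<Longrightarrow> V \<le> W \<Longrightarrow> weight_le \<rho> \<sigma> l W P"
  unfolding weight_le_def by force

lemma weight_le_lin_ext:
  "(\<And>x. x \<in> Poly_Mapping.keys P \<Longrightarrow> weight_le \<rho> \<sigma> l V (f x)) \<Longrightarrow> weight_le \<rho> \<sigma> l V (lin_ext f P)"
  unfolding weight_le_def using keys_lin_ext[of f P] by blast

lemma keys_wmono_mult:
  "Poly_Mapping.keys (wmono_mult l (a, j) (b, n) :: 'a::field_char_0 wel)
    \<subseteq> (\<lambda>k. (a + b - int k * int l, j - k + n)) ` {0..j}"
  unfolding wmono_mult_def prod.simps by (rule order.trans[OF keys_sum]) auto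

text \<open>Each commutation of Y past X^alpha lowers the weight by rho + sigma.\<close>

lemma wdeg_wmono_term:
  assumes "l \<ge> 1" and "k \<le> j"
  shows "wdeg \<rho> \<sigma> l (a + b - int k * int l, j - k + n)
    = wdeg \<rho> \<sigma> l (a, j) + wdeg \<rho> \<sigma> l (b, n) - of_nat k * of_int (\<rho> + \<sigma>)"
proof -
  have "of_int (a + b - int k * int l) / (of_nat l :: rat) = of_int a / of_nat l + of_int b / of_nat l - of_nat k"
    using assms(1) by (simp add: field_simps)
  moreover have "(of_nat (j - k + n) :: rat) = of_nat j + of_nat n - of_nat k"
    using assms(2) by (simp add: of_nat_diff)
  ultimately show ?thesis
    unfolding wdeg_def fst_conv snd_conv by (simp only:) (simp add: algebra_simps)
qed

lemma weight_le_wmono_mult: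
  assumes "l \<ge> 1" and "\<rho> + \<sigma> > 0"
  shows "weight_le \<rho> \<sigma> l (wdeg \<rho> \<sigma> l p + wdeg \<rho> \<sigma> l q) (wmono_mult l p q :: 'a::field_char_0 wel)"
  unfolding weight_le_def
proof
  obtain a j b n where p: "p = (a, j)" and q: "q = (b, n)" by (cases p, cases q)
  fix x assume "x \<in> Poly_Mapping.keys (wmono_mult l p q :: 'a wel)"
  then obtain k where "k \<le> j" and "x = (a + b - int k * int l, j - k + n)"
    using keys_wmono_mult[of l a j b n, where 'a = 'a] unfolding p q by auto
  then show "wdeg \<rho> \<sigma> l x \<le> wdeg \<rho> \<sigma> l p + wdeg \<rho> \<sigma> l q"
    using wdeg_wmono_term[OF assms(1) \<open>k \<le> j\<close>, of \<rho> \<sigma> a b n] assms(2) by (simp add: p q)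
qed

lemma hcomp_wmono_mult:
  assumes "l \<ge> 1" and "\<rho> + \<sigma> > 0"
  shows "hcomp \<rho> \<sigma> l (wdeg \<rho> \<sigma> l p + wdeg \<rho> \<sigma> l q) (wmono_mult l p q :: 'a::field_char_0 wel)
    = Poly_Mapping.single (p + q) 1"
proof -
  obtain a j b n where p: "p = (a, j)" and q: "q = (b, n)" by (cases p, cases q)
  have "hcomp \<rho> \<sigma> l (wdeg \<rho> \<sigma> l p + wdeg \<rho> \<sigma> l q) (wmono_mult l p q :: 'a wel)
      = (\<Sum>k\<in>{0..j}. if k = 0 then Poly_Mapping.single (a + b, j + n) 1 else 0)"
    unfolding wmono_mult_def p q prod.simps hcomp_sum[OF finite_atLeastAtMost] hcomp_single
  proof (rule sum.cong[OF refl])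
    fix k assume "k \<in> {0..j}"
    then have "wdeg \<rho> \<sigma> l (a + b - int k * int l, j - k + n) = wdeg \<rho> \<sigma> l (a, j) + wdeg \<rho> \<sigma> l (b, n)
        \<longleftrightarrow> k = 0"
      using wdeg_wmono_term[OF assms(1), of k j \<rho> \<sigma> a b n] assms(2) by simp
    then show "(if wdeg \<rho> \<sigma> l (a + b - int k * int l, j - k + n) = wdeg \<rho> \<sigma> l (a, j) + wdeg \<rho> \<sigma> l (b, n)
          then Poly_Mapping.single (a + b - int k * int l, j - k + n)
                 (of_nat (j choose k) * (\<Prod>t<k. of_int b / of_nat l - of_nat t)) else 0)
        = (if k = 0 then Poly_Mapping.single (a + b, j + n) 1 else 0)"
      by simp
  qed
  then show ?thesis by (simp add: p q)
qed

lemma weight_le_wmult: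
  assumes "l \<ge> 1" and "\<rho> + \<sigma> > 0"
    and "weight_le \<rho> \<sigma> l V P" and "weight_le \<rho> \<sigma> l W (Q :: 'a::field_char_0 wel)"
  shows "weight_le \<rho> \<sigma> l (V + W) (wmult l P Q)"
  unfolding wmult_eq_lin_ext
proof (intro weight_le_lin_ext)
  fix p q assume "p \<in> Poly_Mapping.keys P" and "q \<in> Poly_Mapping.keys Q"
  then have "wdeg \<rho> \<sigma> l p + wdeg \<rho> \<sigma> l q \<le> V + W"
    using assms(3,4) by (intro add_mono) (auto simp: weight_le_def)
  then show "weight_le \<rho> \<sigma> l (V + W) (wmono_mult l p q :: 'a wel)"
    using weight_le_mono weight_le_wmono_mult[OF assms(1,2)] by blast
qed

text \<open>The product on the right-hand side is the commutative product of L^(l).\<close>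

lemma hcomp_wmult:
  assumes "l \<ge> 1" and "\<rho> + \<sigma> > 0"
    and "weight_le \<rho> \<sigma> l V P" and "weight_le \<rho> \<sigma> l W (Q :: 'a::field_char_0 wel)"
  shows "hcomp \<rho> \<sigma> l (V + W) (wmult l P Q) = hcomp \<rho> \<sigma> l V P * hcomp \<rho> \<sigma> l W Q"
proof -
  let ?top = "\<lambda>V k. if wdeg \<rho> \<sigma> l k = V then Poly_Mapping.single k 1 else (0 :: 'a wel)"
  have "hcomp \<rho> \<sigma> l (V + W) (wmult l P Q)
      = lin_ext (\<lambda>p. lin_ext (\<lambda>q. hcomp \<rho> \<sigma> l (V + W) (wmono_mult l p q)) Q) P"
    unfolding wmult_eq_lin_ext hcomp_lin_ext ..
  also have "\<dots> = lin_ext (\<lambda>p. lin_ext (\<lambda>q. ?top V p * ?top W q) Q) P"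
  proof (intro lin_ext_cong)
    fix p q assume "p \<in> Poly_Mapping.keys P" and "q \<in> Poly_Mapping.keys Q"
    then have weights: "wdeg \<rho> \<sigma> l p \<le> V" "wdeg \<rho> \<sigma> l q \<le> W"
      using assms(3,4) by (auto simp: weight_le_def)
    show "hcomp \<rho> \<sigma> l (V + W) (wmono_mult l p q) = ?top V p * ?top W q"
    proof (cases "wdeg \<rho> \<sigma> l p = V \<and> wdeg \<rho> \<sigma> l q = W")
      case True
      then show ?thesis using hcomp_wmono_mult[OF assms(1,2), of p q] by (simp add: mult_single)
    next
      case False
      then have "wdeg \<rho> \<sigma> l p + wdeg \<rho> \<sigma> l q < V + W" using weights by linarith
      then have "hcomp \<rho> \<sigma> l (V + W) (wmono_mult l p q :: 'a wel) = 0"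
        by (rule hcomp_eq_0_if_weight_less[OF weight_le_wmono_mult[OF assms(1,2)]])
      then show ?thesis using False by auto
    qed
  qed
  also have "\<dots> = hcomp \<rho> \<sigma> l V P * hcomp \<rho> \<sigma> l W Q"
    unfolding hcomp_def by (subst lin_ext_times_left, subst lin_ext_times_right) (rule refl)
  finally show ?thesis .
qed

lemma weight_le_vdeg: "weight_le \<rho> \<sigma> l (vdeg \<rho> \<sigma> l P) P"
  unfolding weight_le_def vdeg_def by (auto intro: Max_ge)

lemma lead_eq_hcomp: "lead \<rho> \<sigma> l P = hcomp \<rho> \<sigma> l (vdeg \<rho> \<sigma> l P) P"
  by (rule poly_mapping_eqI)
     (simp add: lead_def lookup_sum lookup_hcomp lookup_single when_def in_keys_iff)

lemma lead_neq_0: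
  assumes "P \<noteq> 0"
  shows "lead \<rho> \<sigma> l P \<noteq> 0"
proof -
  have "vdeg \<rho> \<sigma> l P \<in> wdeg \<rho> \<sigma> l ` Poly_Mapping.keys P"
    unfolding vdeg_def using assms by (intro Max_in) auto
  then obtain k where "k \<in> Poly_Mapping.keys P" "wdeg \<rho> \<sigma> l k = vdeg \<rho> \<sigma> l P" by auto
  then have "Poly_Mapping.lookup (lead \<rho> \<sigma> l P) k \<noteq> 0"
    by (simp add: lead_eq_hcomp lookup_hcomp in_keys_iff)
  then show ?thesis by auto
qed

lemma vdeg_eq_if_hcomp_neq_0:
  assumes "weight_le \<rho> \<sigma> l V P" and "hcomp \<rho> \<sigma> l V P \<noteq> 0"
  shows "vdeg \<rho> \<sigma> l P = V"
proof -
  obtain k where "Poly_Mapping.lookup (hcomp \<rho> \<sigma> l V P) k \<noteq> 0"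
    using assms(2) by (metis poly_mapping_eqI lookup_zero)
  then have "k \<in> Poly_Mapping.keys P" "wdeg \<rho> \<sigma> l k = V"
    by (auto simp: lookup_hcomp in_keys_iff split: if_splits)
  then show ?thesis
    unfolding vdeg_def by (intro Max_eqI) (use assms(1) in \<open>auto simp: weight_le_def\<close>)
qed

subsection \<open>The commutative product of L^(l)\<close>

lemma lmult_eq_times: "lmult P Q = P * (Q :: 'a::field_char_0 wel)"
proof -
  have "P * Q = lin_ext (\<lambda>p. lin_ext (\<lambda>q. Poly_Mapping.single p 1 * Poly_Mapping.single q 1) Q) P"
    by (subst (1 2) lin_ext_single_id[symmetric], subst lin_ext_times_left, subst lin_ext_times_right)
       (rule refl)
  also have "\<dots> = lmult P Q"
  proof (rule poly_mapping_eqI)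
    fix k
    have plus: "p + q = (fst p + fst q, snd p + snd q)" for p q :: "int \<times> nat"
      by (cases p, cases q) simp
    show "Poly_Mapping.lookup (lin_ext (\<lambda>p. lin_ext (\<lambda>q. Poly_Mapping.single p 1 * Poly_Mapping.single q 1) Q) P) k
        = Poly_Mapping.lookup (lmult P Q) k"
      unfolding lmult_def lookup_lin_ext lookup_sum mult_single sum_distrib_left
      by (intro sum.cong refl) (simp add: lookup_single plus[symmetric] mult_when)
  qed
  finally show ?thesis by simp
qed

lemma lpow_eq_power: "lpow P m = P ^ m"
  by (induction m) (simp_all add: lmult_eq_times zero_prod_def[symmetric])

lemma lsmult_eq_times: "lsmult c P = Poly_Mapping.single 0 c * P"
  unfolding lsmult_def by (simp add: mult_map_scale_conv_mult[symmetric])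

text \<open>With the lexicographic order on exponents, L^(l) is an integral domain.\<close>

instance prod :: (ordered_cancel_comm_monoid_add, ordered_cancel_comm_monoid_add) ordered_cancel_comm_monoid_add
proof
  fix a b c :: "'a \<times> 'b"
  assume "a \<le> b"
  then show "c + a \<le> c + b"
    by (cases a, cases b, cases c) (auto simp: less_eq_prod_def add_strict_left_mono add_left_mono)
qed

subsection \<open>Leading forms of powers and of commutators with powers\<close>

lemma weight_le_wpow:
  assumes "l \<ge> 1" and "\<rho> + \<sigma> > 0"
  shows "weight_le \<rho> \<sigma> l (of_nat m * vdeg \<rho> \<sigma> l C) (wpow l C m)"
proof (induction m)
  case 0
  then show ?case by (simp add: weight_le_def wone_def wdeg_def)
next
  case (Suc m)
  then show ?case
    using weight_le_wmult[OF assms weight_le_vdeg Suc.IH] by (simp add: algebra_simps)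
qed

lemma hcomp_wpow:
  assumes "l \<ge> 1" and "\<rho> + \<sigma> > 0"
  shows "hcomp \<rho> \<sigma> l (of_nat m * vdeg \<rho> \<sigma> l C) (wpow l C m) = lead \<rho> \<sigma> l C ^ m"
proof (induction m)
  case 0
  have "hcomp \<rho> \<sigma> l 0 (Poly_Mapping.single (0, 0) 1 :: 'a wel)
      = (if wdeg \<rho> \<sigma> l (0, 0) = 0 then Poly_Mapping.single (0, 0) 1 else 0)"
    by (rule hcomp_single)
  then show ?case by (simp add: wone_def wdeg_def zero_prod_def[symmetric])
next
  case (Suc m)
  have "hcomp \<rho> \<sigma> l (of_nat (Suc m) * vdeg \<rho> \<sigma> l C) (wpow l C (Suc m))
      = hcomp \<rho> \<sigma> l (vdeg \<rho> \<sigma> l C + of_nat m * vdeg \<rho> \<sigma> l C) (wmult l C (wpow l C m))"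
    by (simp add: algebra_simps)
  also have "\<dots> = lead \<rho> \<sigma> l C * lead \<rho> \<sigma> l C ^ m"
    unfolding hcomp_wmult[OF assms weight_le_vdeg weight_le_wpow[OF assms]] Suc.IH lead_eq_hcomp ..
  finally show ?case by simp
qed

lemma weight_le_wcomm_wpow:
  assumes "l \<ge> 1" and "\<rho> + \<sigma> > 0"
  shows "weight_le \<rho> \<sigma> l (of_nat m * vdeg \<rho> \<sigma> l C + vdeg \<rho> \<sigma> l (wcomm l C E))
    (wcomm l (wpow l C (Suc m)) E)"
proof (induction m)
  case 0
  then show ?case using weight_le_vdeg by (simp add: wmult_wone_right[OF assms(1)])
next
  case (Suc m)
  let ?vC = "vdeg \<rho> \<sigma> l C" and ?vD = "vdeg \<rho> \<sigma> l (wcomm l C E)"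
  have "weight_le \<rho> \<sigma> l (?vC + (of_nat m * ?vC + ?vD)) (wmult l C (wcomm l (wpow l C (Suc m)) E))"
    by (rule weight_le_wmult[OF assms weight_le_vdeg Suc.IH])
  moreover have "weight_le \<rho> \<sigma> l (?vD + of_nat (Suc m) * ?vC) (wmult l (wcomm l C E) (wpow l C (Suc m)))"
    by (rule weight_le_wmult[OF assms weight_le_vdeg weight_le_wpow[OF assms]])
  moreover have "?vC + (of_nat m * ?vC + ?vD) = of_nat (Suc m) * ?vC + ?vD"
    and "?vD + of_nat (Suc m) * ?vC = of_nat (Suc m) * ?vC + ?vD"
    by (simp_all add: algebra_simps)
  ultimately show ?case
    unfolding wcomm_wpow_Suc[OF assms(1), of C "Suc m" E] by (metis weight_le_add)
qed

lemma hcomp_wcomm_wpow: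
  assumes "l \<ge> 1" and "\<rho> + \<sigma> > 0"
  shows "hcomp \<rho> \<sigma> l (of_nat m * vdeg \<rho> \<sigma> l C + vdeg \<rho> \<sigma> l (wcomm l C E)) (wcomm l (wpow l C (Suc m)) E)
    = of_nat (Suc m) * lead \<rho> \<sigma> l C ^ m * lead \<rho> \<sigma> l (wcomm l C E)"
proof (induction m)
  case 0
  then show ?case by (simp add: wmult_wone_right[OF assms(1)] lead_eq_hcomp)
next
  case (Suc m)
  let ?vC = "vdeg \<rho> \<sigma> l C" and ?vD = "vdeg \<rho> \<sigma> l (wcomm l C E)"
  let ?LC = "lead \<rho> \<sigma> l C" and ?LD = "lead \<rho> \<sigma> l (wcomm l C E)"
  have weights: "of_nat (Suc m) * ?vC + ?vD = ?vC + (of_nat m * ?vC + ?vD)"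
    "of_nat (Suc m) * ?vC + ?vD = ?vD + of_nat (Suc m) * ?vC"
    by (simp_all add: algebra_simps)
  have "hcomp \<rho> \<sigma> l (of_nat (Suc m) * ?vC + ?vD) (wcomm l (wpow l C (Suc (Suc m))) E)
      = hcomp \<rho> \<sigma> l (?vC + (of_nat m * ?vC + ?vD)) (wmult l C (wcomm l (wpow l C (Suc m)) E))
        + hcomp \<rho> \<sigma> l (?vD + of_nat (Suc m) * ?vC) (wmult l (wcomm l C E) (wpow l C (Suc m)))"
    unfolding wcomm_wpow_Suc[OF assms(1), of C "Suc m" E] hcomp_add weights[symmetric] ..
  also have "\<dots> = ?LC * (of_nat (Suc m) * ?LC ^ m * ?LD) + ?LD * ?LC ^ Suc m"
    unfolding hcomp_wmult[OF assms weight_le_vdeg weight_le_wcomm_wpow[OF assms]]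
      hcomp_wmult[OF assms weight_le_vdeg weight_le_wpow[OF assms]]
      Suc.IH hcomp_wpow[OF assms] lead_eq_hcomp ..
  also have "\<dots> = of_nat (Suc (Suc m)) * ?LC ^ Suc m * ?LD"
    by (simp add: algebra_simps)
  finally show ?case .
qed

lemma wbracket_neq_0_iff:
  assumes "wcomm l P Q \<noteq> 0"
  shows "wbracket \<rho> \<sigma> l P Q \<noteq> 0
    \<longleftrightarrow> vdeg \<rho> \<sigma> l P + vdeg \<rho> \<sigma> l Q - of_int (\<rho> + \<sigma>) \<le> vdeg \<rho> \<sigma> l (wcomm l P Q)"
  using assms lead_neq_0[OF assms] by (auto simp: wbracket_def)

theorem lemma2p13:
  fixes C E :: "'a::field_char_0 wel" and l m :: nat and \<rho> \<sigma> :: int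
  assumes "l \<ge> 1" and "C \<noteq> 0" and "E \<noteq> 0" and "m \<ge> 1"
    and "gcd \<rho> \<sigma> = 1" and "\<rho> + \<sigma> > 0"
    and "wcomm l C E \<noteq> 0"
  shows "wcomm l (wpow l C m) E \<noteq> 0
    \<and> lead \<rho> \<sigma> l (wcomm l (wpow l C m) E)
        = lsmult (of_nat m) (lmult (lpow (lead \<rho> \<sigma> l C) (m - 1)) (lead \<rho> \<sigma> l (wcomm l C E)))
    \<and> (wbracket \<rho> \<sigma> l (wpow l C m) E \<noteq> 0 \<longleftrightarrow> wbracket \<rho> \<sigma> l C E \<noteq> 0)"
proof -
  note lr = assms(1,6)
  obtain k where m: "m = Suc k" using assms(4) by (cases m) auto
  let ?vC = "vdeg \<rho> \<sigma> l C" and ?vD = "vdeg \<rho> \<sigma> l (wcomm l C E)"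
  let ?LC = "lead \<rho> \<sigma> l C" and ?LD = "lead \<rho> \<sigma> l (wcomm l C E)"
  have LC: "?LC \<noteq> 0" and LD: "?LD \<noteq> 0" using assms(2,7) by (simp_all add: lead_neq_0)
  have "(of_nat m :: 'a wel) \<noteq> 0"
    unfolding of_nat_eq_0_iff using assms(4) by simp
  then have top: "hcomp \<rho> \<sigma> l (of_nat k * ?vC + ?vD) (wcomm l (wpow l C m) E) = of_nat m * ?LC ^ k * ?LD"
    and "of_nat m * ?LC ^ k * ?LD \<noteq> 0"
    using hcomp_wcomm_wpow[OF lr, of k C E] LC LD by (simp_all add: m)
  then have comm: "wcomm l (wpow l C m) E \<noteq> 0"
    and vcomm: "vdeg \<rho> \<sigma> l (wcomm l (wpow l C m) E) = of_nat k * ?vC + ?vD"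
    using vdeg_eq_if_hcomp_neq_0[OF weight_le_wcomm_wpow[OF lr, of k C E]] by (auto simp: m hcomp_def)
  have vpow: "vdeg \<rho> \<sigma> l (wpow l C m) = of_nat m * ?vC"
    by (rule vdeg_eq_if_hcomp_neq_0[OF weight_le_wpow[OF lr]]) (simp add: hcomp_wpow[OF lr] LC)
  have "(of_nat m :: rat) * ?vC = of_nat k * ?vC + ?vC"
    by (simp add: m algebra_simps)
  then have "wbracket \<rho> \<sigma> l (wpow l C m) E \<noteq> 0 \<longleftrightarrow> wbracket \<rho> \<sigma> l C E \<noteq> 0"
    unfolding wbracket_neq_0_iff[OF comm] wbracket_neq_0_iff[OF assms(7)] vcomm vpow by linarith
  moreover have "lsmult (of_nat m) (lmult (lpow ?LC (m - 1)) ?LD) = of_nat m * ?LC ^ k * ?LD"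
    unfolding lsmult_eq_times lmult_eq_times lpow_eq_power single_of_nat by (simp add: m mult.assoc)
  ultimately show ?thesis
    using comm vcomm top by (simp add: lead_eq_hcomp)
qed

end
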